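(* Let $\alpha=a+b\sqrt{D}\in\mathbb{R}$ with $a,b\in\mathbb{Q}$, $b\neq 0$, and $D\ge 2$ a squarefree integer, and let $K=\mathbb{Q}(\alpha)$. Then \[\mathcal{A}_1(\alpha)=\left\{\pm 2b\sqrt{D}\,\mathrm{N}(s) : s\in\Lambda^*\setminus\{0\}\right\},\] where $\Lambda^*$ is the lattice in $K$ dual to $\Lambda=\mathbb{Z}+\alpha\mathbb{Z}$ with respect to the trace form.
   Context: For $\alpha\in\mathbb{R}$, $\mathcal{A}_1(\alpha)$ denotes the set of accumulation points in $\mathbb{R}$ of $\{|q|(q\alpha-p):q\in\mathbb{Z}\setminus\{0\},\ p\in\mathbb{Z}\}$. $\mathrm{N}$ and $\mathrm{Tr}$ are the norm and trace maps from $K$ to $\mathbb{Q}$. The trace form on $K$ is $\langle x,y\rangle=\mathrm{Tr}(xy)$. For the lattice $\Lambda=\mathbb{Z}+\alpha\mathbb{Z}$, its dual lattice with respect to the trace form is $\Lambda^*=\{x\in K:\mathrm{Tr}(xy)\in\mathbb{Z}\text{ for all }y\in\Lambda\}$, equivalently $\Lambda^*=\alpha_0^*\mathbb{Z}+\alpha_1^*\mathbb{Z}$ where $\{\alpha_0^*,\alpha_1^*\}\subset K$ is the basis with $\mathrm{Tr}(\alpha_i\alpha_j^* )=\delta_{ij}$ for $\alpha_0=1,\alpha_1=\alpha$. *)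

theory Defs
  imports "HOL-Analysis.Analysis" "HOL-Computational_Algebra.Squarefree"
begin

text \<open>Elements of the real quadratic field K = Q(sqrt D) are represented by their
  coordinates (x, y) :: rat \<times> rat, standing for the real number x + y sqrt D.\<close>

definition qf_emb :: "int \<Rightarrow> rat \<times> rat \<Rightarrow> real" where
  "qf_emb D u = of_rat (fst u) + of_rat (snd u) * sqrt (of_int D)"

definition qf_mult :: "int \<Rightarrow> rat \<times> rat \<Rightarrow> rat \<times> rat \<Rightarrow> rat \<times> rat" where
  "qf_mult D u v = (fst u * fst v + of_int D * snd u * snd v, fst u * snd v + snd u * fst v)"

definition qf_trace :: "rat \<times> rat \<Rightarrow> rat" where
  "qf_trace u = 2 * fst u"

definition qf_norm :: "int \<Rightarrow> rat \<times> rat \<Rightarrow> rat" where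
  "qf_norm D u = (fst u)\<^sup>2 - of_int D * (snd u)\<^sup>2"

text \<open>Dual lattice of Lambda = Z + alpha Z, alpha = a + b sqrt D, w.r.t. the trace form:
  all s in K with Tr(s * 1) and Tr(s * alpha) integers.\<close>
definition dual_lattice :: "int \<Rightarrow> rat \<Rightarrow> rat \<Rightarrow> (rat \<times> rat) set" where
  "dual_lattice D a b = {s. qf_trace s \<in> \<int> \<and> qf_trace (qf_mult D s (a, b)) \<in> \<int>}"

definition A1 :: "real \<Rightarrow> real set" where
  "A1 \<alpha> = {x. x islimpt {\<bar>real_of_int q\<bar> * (real_of_int q * \<alpha> - real_of_int p) | q p. q \<noteq> 0}}"

end

(*
  Write xi = p - q alpha and xi' = p - q alpha' for the conjugate alpha' = a - b sqrt D.
  Since xi' - xi = q (alpha - alpha'), the number |q| (q alpha - p) equals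
  +-(xi^2 - xi xi') / (alpha - alpha'), where xi xi' is the norm of p - q alpha, a rational
  number of bounded denominator. If |q| (q alpha - p) stays bounded while |q| grows, then xi^2
  tends to 0, so every accumulation point is +-xi xi' / (alpha - alpha') with (p, q) <> 0, and
  there are only finitely many candidates near a given point. Conversely, a unit 0 < eps < 1
  built from a solution of Pell's equation maps Z + alpha Z into itself; along the orbit
  p - q alpha -> eps^k (p - q alpha) the norm is constant while xi tends to 0, so each such
  value is an accumulation point. Finally s -> (Tr s, Tr (s alpha)) identifies the dual lattice
  with Z^2, and N(s) = - xi xi' / (alpha - alpha')^2 for the corresponding pair.
*)

theory Submission
  imports Defs
begin

section \<open>Pell's equation\<close>

lemma pell_norm_nonzero:
  fixes \<theta> :: real and E h k :: int
  assumes "\<theta> \<notin> \<rat>" and "\<theta>\<^sup>2 = of_int E" and "k \<noteq> 0"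
  shows "h\<^sup>2 - E * k\<^sup>2 \<noteq> 0"
proof
  assume "h\<^sup>2 - E * k\<^sup>2 = 0"
  then have "(of_int h / of_int k)\<^sup>2 = \<theta>\<^sup>2"
    using assms(2,3) by (simp add: field_simps flip: of_int_power of_int_mult)
  then have "\<bar>\<theta>\<bar> = \<bar>of_int h / of_int k\<bar>"
    by (metis power2_eq_iff abs_minus_cancel)
  then have "\<bar>\<theta>\<bar> \<in> \<rat>"
    by simp
  with assms(1) show False
    by (metis Rats_minus_iff abs_if)
qed

lemma approx_set_pell_norm_bound:
  fixes \<theta> :: real and E :: int
  assumes "\<theta>\<^sup>2 = of_int E" and "(h, k) \<in> approx_set \<theta>"
  shows "\<bar>of_int (h\<^sup>2 - E * k\<^sup>2)\<bar> \<le> 2 * \<bar>\<theta>\<bar> + 1"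
proof -
  define u where "u = of_int h / (of_int k :: real)"
  from assms(2) have k: "k > 0" and close: "\<bar>\<theta> - u\<bar> < 1 / (of_int k)\<^sup>2"
    by (auto simp: approx_set_def u_def)
  have k1: "1 / (of_int k)\<^sup>2 \<le> (1 :: real)"
    using k by (simp add: power_le_one_iff divide_le_eq)
  have "\<bar>u + \<theta>\<bar> \<le> \<bar>\<theta> - u\<bar> + 2 * \<bar>\<theta>\<bar>"
    by linarith
  then have "\<bar>(\<theta> - u) * (u + \<theta>)\<bar> \<le> 1 / (of_int k)\<^sup>2 * (1 / (of_int k)\<^sup>2 + 2 * \<bar>\<theta>\<bar>)"
    unfolding abs_mult using close by (intro mult_mono) auto
  also have "\<dots> \<le> 1 / (of_int k)\<^sup>2 * (1 + 2 * \<bar>\<theta>\<bar>)"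
    using k1 by (intro mult_left_mono) auto
  finally have "(of_int k)\<^sup>2 * \<bar>(\<theta> - u) * (u + \<theta>)\<bar> \<le> 1 + 2 * \<bar>\<theta>\<bar>"
    using k by (simp add: field_simps)
  moreover have "of_int (h\<^sup>2 - E * k\<^sup>2) = - ((of_int k)\<^sup>2 * ((\<theta> - u) * (u + \<theta>)))"
    using k assms(1) by (simp add: u_def field_simps power2_eq_square)
  ultimately show ?thesis
    by (simp add: abs_mult)
qed

lemma proportional_pairs_of_equal_norm:
  fixes E m h1 k1 h2 k2 :: int
  assumes norm1: "h1\<^sup>2 - E * k1\<^sup>2 = m" and norm2: "h2\<^sup>2 - E * k2\<^sup>2 = m" and "m \<noteq> 0"
    and "k1 > 0" and "k2 > 0" and cross: "k1 * h2 = h1 * k2"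
  shows "(h1, k1) = (h2, k2)"
proof -
  have "k1\<^sup>2 * m = (k1 * h2)\<^sup>2 - E * k1\<^sup>2 * k2\<^sup>2"
    unfolding norm2[symmetric] by (simp add: algebra_simps power2_eq_square)
  also have "\<dots> = (h1 * k2)\<^sup>2 - E * k1\<^sup>2 * k2\<^sup>2"
    unfolding cross ..
  also have "\<dots> = k2\<^sup>2 * m"
    unfolding norm1[symmetric] by (simp add: algebra_simps power2_eq_square)
  finally have "k1\<^sup>2 * m = k2\<^sup>2 * m" .
  then have "k1 = k2"
    using \<open>m \<noteq> 0\<close> \<open>k1 > 0\<close> \<open>k2 > 0\<close> by (simp add: power2_eq_iff_nonneg)
  with cross \<open>k1 > 0\<close> show ?thesis
    by simp
qed

text \<open>\<open>X + Y\<surd>E\<close> is the quotient \<open>(h\<^sub>2 - k\<^sub>2\<surd>E) / (h\<^sub>1 - k\<^sub>1\<surd>E)\<close>, whose coefficients are integers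
  because of the congruences modulo the common norm \<open>m\<close>.\<close>

lemma pell_of_congruent_pairs:
  fixes E m h1 k1 h2 k2 :: int
  assumes norm1: "h1\<^sup>2 - E * k1\<^sup>2 = m" and norm2: "h2\<^sup>2 - E * k2\<^sup>2 = m" and "m \<noteq> 0"
    and "m dvd h2 - h1" and "m dvd k2 - k1"
    and "k1 > 0" and "k2 > 0" and "(h1, k1) \<noteq> (h2, k2)"
  obtains X Y where "Y \<noteq> 0" and "X\<^sup>2 - E * Y\<^sup>2 = 1"
proof -
  obtain u w where h2: "h2 = h1 + m * u" and k2: "k2 = k1 + m * w"
    using assms(4,5) by (metis add_diff_cancel_left' dvd_def diff_add_cancel add.commute)
  define X where "X = 1 + h1 * u - E * k1 * w"
  define Y where "Y = k1 * u - h1 * w"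
  have X: "h1 * h2 - E * k1 * k2 = m * X"
    unfolding X_def h2 k2 using norm1 by (simp add: algebra_simps power2_eq_square)
  have Y: "k1 * h2 - h1 * k2 = m * Y"
    unfolding Y_def h2 k2 by (simp add: algebra_simps)
  have "m\<^sup>2 * (X\<^sup>2 - E * Y\<^sup>2) = (m * X)\<^sup>2 - E * (m * Y)\<^sup>2"
    by (simp add: algebra_simps power2_eq_square)
  also have "\<dots> = (h1 * h2 - E * k1 * k2)\<^sup>2 - E * (k1 * h2 - h1 * k2)\<^sup>2"
    unfolding X Y ..
  also have "\<dots> = (h1\<^sup>2 - E * k1\<^sup>2) * (h2\<^sup>2 - E * k2\<^sup>2)"
    by (simp add: algebra_simps power2_eq_square)
  also have "\<dots> = m\<^sup>2 * 1"
    using norm1 norm2 by (simp add: power2_eq_square)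
  finally have "X\<^sup>2 - E * Y\<^sup>2 = 1"
    using \<open>m \<noteq> 0\<close> by (metis mult_left_cancel power_not_zero)
  moreover have "Y \<noteq> 0"
    using proportional_pairs_of_equal_norm[OF norm1 norm2 \<open>m \<noteq> 0\<close> \<open>k1 > 0\<close> \<open>k2 > 0\<close>] Y assms(8)
    by auto
  ultimately show thesis
    using that by blast
qed

lemma approx_set_infinite_norm_fibre:
  fixes \<theta> :: real and E :: int
  assumes irrational: "\<theta> \<notin> \<rat>" and square: "\<theta>\<^sup>2 = of_int E"
  obtains m where "m \<noteq> 0" and "infinite {(h, k) \<in> approx_set \<theta>. h\<^sup>2 - E * k\<^sup>2 = m}"
proof -
  define f where "f = (\<lambda>(h, k). h\<^sup>2 - E * k\<^sup>2)"
  define C where "C = \<lfloor>2 * \<bar>\<theta>\<bar> + 1\<rfloor>"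
  have "f a \<in> {-C..C}" if "a \<in> approx_set \<theta>" for a
  proof -
    obtain h k where a: "a = (h, k)"
      by fastforce
    have "\<bar>of_int (f a)\<bar> \<le> 2 * \<bar>\<theta>\<bar> + 1"
      using approx_set_pell_norm_bound[OF square] that by (simp add: a f_def)
    then have "\<bar>f a\<bar> \<le> C"
      unfolding C_def by (metis le_floor_iff of_int_abs)
    then show ?thesis
      by (simp add: abs_le_iff)
  qed
  then have "f ` approx_set \<theta> \<subseteq> {-C..C}"
    by blast
  then have "finite (f ` approx_set \<theta>)"
    by (rule finite_subset) simp
  moreover have "infinite (approx_set \<theta>)"
    using irrational rational_iff_finite_approx_set by blast
  ultimately obtain a0 where "a0 \<in> approx_set \<theta>"
    and infinite_fibre: "infinite {a \<in> approx_set \<theta>. f a = f a0}"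
    using pigeonhole_infinite by blast
  have "f a0 \<noteq> 0"
    using \<open>a0 \<in> approx_set \<theta>\<close> pell_norm_nonzero[OF irrational square]
    by (auto simp: f_def approx_set_def)
  moreover have "{(h, k) \<in> approx_set \<theta>. h\<^sup>2 - E * k\<^sup>2 = f a0} = {a \<in> approx_set \<theta>. f a = f a0}"
    by (auto simp: f_def)
  ultimately show thesis
    using that[of "f a0"] infinite_fibre by simp
qed

lemma pell_equation_solvable:
  fixes \<theta> :: real and E :: int
  assumes irrational: "\<theta> \<notin> \<rat>" and square: "\<theta>\<^sup>2 = of_int E"
  obtains X Y where "Y \<noteq> 0" and "X\<^sup>2 - E * Y\<^sup>2 = 1"
proof -
  obtain m where "m \<noteq> 0" and infinite: "infinite {(h, k) \<in> approx_set \<theta>. h\<^sup>2 - E * k\<^sup>2 = m}"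
    (is "infinite ?P")
    using approx_set_infinite_norm_fibre[OF irrational square] .
  define g where "g = (\<lambda>(h, k). (h mod \<bar>m\<bar>, k mod \<bar>m\<bar>))"
  have "g ` ?P \<subseteq> {0..<\<bar>m\<bar>} \<times> {0..<\<bar>m\<bar>}"
    using \<open>m \<noteq> 0\<close> by (auto simp: g_def)
  then have "finite (g ` ?P)"
    by (rule finite_subset) simp
  then have "\<not> inj_on g ?P"
    using infinite finite_imageD by blast
  then obtain h1 k1 h2 k2 where in_P: "(h1, k1) \<in> ?P" "(h2, k2) \<in> ?P"
    and "(h1, k1) \<noteq> (h2, k2)" and "g (h1, k1) = g (h2, k2)"
    unfolding inj_on_def by auto
  then have congruent: "m dvd h2 - h1" "m dvd k2 - k1"
    by (auto simp: g_def mod_eq_dvd_iff dvd_diff_commute)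
  from in_P have norms: "h1\<^sup>2 - E * k1\<^sup>2 = m" "h2\<^sup>2 - E * k2\<^sup>2 = m"
    and positive: "k1 > 0" "k2 > 0"
    by (auto simp: approx_set_def)
  show thesis
    using that
    by (rule pell_of_congruent_pairs[OF norms \<open>m \<noteq> 0\<close> congruent positive \<open>(h1, k1) \<noteq> (h2, k2)\<close>])
qed

lemma reciprocal_abs_less_one:
  fixes x y :: real
  assumes "x * y = 1" and "x \<noteq> y"
  shows "\<bar>x\<bar> < 1 \<or> \<bar>y\<bar> < 1"
proof (rule ccontr)
  assume "\<not> ?thesis"
  then have "1 \<le> \<bar>x\<bar>" and "1 \<le> \<bar>y\<bar>"
    by auto
  moreover have "\<bar>x\<bar> * \<bar>y\<bar> = 1"
    using assms(1) by (simp flip: abs_mult)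
  moreover have "\<bar>x\<bar> * 1 \<le> \<bar>x\<bar> * \<bar>y\<bar>" and "1 * \<bar>y\<bar> \<le> \<bar>x\<bar> * \<bar>y\<bar>"
    using calculation by (intro mult_left_mono mult_right_mono; simp)+
  ultimately have "\<bar>x\<bar> = 1" and "\<bar>y\<bar> = 1"
    by linarith+
  with assms show False
    by (auto simp: abs_if split: if_splits)
qed

lemma pell_unit_in_unit_interval:
  fixes \<theta> :: real and E :: int
  assumes irrational: "\<theta> \<notin> \<rat>" and square: "\<theta>\<^sup>2 = of_int E"
  obtains X Y where "X\<^sup>2 - E * Y\<^sup>2 = 1" and "0 < X + Y * \<theta>" and "X + Y * \<theta> < 1"
proof -
  obtain X Y where "Y \<noteq> 0" and pell: "X\<^sup>2 - E * Y\<^sup>2 = 1"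
    using pell_equation_solvable[OF irrational square] .
  have "(of_int X + of_int Y * \<theta>) * (of_int X + of_int (- Y) * \<theta>) = of_int (X\<^sup>2 - E * Y\<^sup>2)"
    using square by (simp add: algebra_simps power2_eq_square)
  also have "\<dots> = 1"
    unfolding pell by simp
  finally have unit: "(of_int X + of_int Y * \<theta>) * (of_int X + of_int (- Y) * \<theta>) = 1" .
  have "\<theta> \<noteq> 0"
    using irrational by auto
  with \<open>Y \<noteq> 0\<close> have "of_int X + of_int Y * \<theta> \<noteq> of_int X + of_int (- Y) * \<theta>"
    by simp
  with unit obtain Y' where Y': "Y' = Y \<or> Y' = - Y" and small: "\<bar>of_int X + of_int Y' * \<theta>\<bar> < 1"
    using reciprocal_abs_less_one by blast
  have pell': "X\<^sup>2 - E * Y'\<^sup>2 = 1" and "of_int X + of_int Y' * \<theta> \<noteq> 0"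
    using pell Y' unit by auto
  then consider "0 < of_int X + of_int Y' * \<theta>" | "0 < of_int (- X) + of_int (- Y') * \<theta>"
    by fastforce
  then show thesis
  proof cases
    case 1
    with that pell' small show thesis
      by (auto simp: abs_less_iff)
  next
    case 2
    moreover have "(- X)\<^sup>2 - E * (- Y')\<^sup>2 = 1"
      using pell' by simp
    ultimately show thesis
      using small by (intro that[of "- X" "- Y'"]) (auto simp: abs_less_iff)
  qed
qed

section \<open>Linear forms in a real number and its conjugate\<close>

definition linear_form :: "real \<Rightarrow> int \<Rightarrow> int \<Rightarrow> real" where
  "linear_form \<beta> p q = of_int p - of_int q * \<beta>"

definition norm_form :: "real \<Rightarrow> real \<Rightarrow> int \<Rightarrow> int \<Rightarrow> real" where
  "norm_form \<beta> \<beta>' p q = linear_form \<beta> p q * linear_form \<beta>' p q"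

definition scaled_errors :: "real \<Rightarrow> real set" where
  "scaled_errors \<alpha> = {\<bar>real_of_int q\<bar> * (real_of_int q * \<alpha> - real_of_int p) | q p. q \<noteq> 0}"

lemma A1_eq_limit_points: "A1 \<alpha> = {x. x islimpt scaled_errors \<alpha>}"
  unfolding A1_def scaled_errors_def ..

lemma scaled_errors_uminus:
  assumes "y \<in> scaled_errors \<alpha>"
  shows "- y \<in> scaled_errors \<alpha>"
proof -
  obtain q p where "q \<noteq> 0" and "y = \<bar>real_of_int q\<bar> * (real_of_int q * \<alpha> - real_of_int p)"
    using assms by (auto simp: scaled_errors_def)
  then have "- q \<noteq> 0" and "- y = \<bar>real_of_int (- q)\<bar> * (real_of_int (- q) * \<alpha> - real_of_int (- p))"
    by (simp_all add: algebra_simps)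
  then show ?thesis
    unfolding scaled_errors_def by blast
qed

lemma finite_bounded_scaled_errors:
  "finite {\<bar>real_of_int q\<bar> * (real_of_int q * \<alpha> - real_of_int p) | q p.
     q \<noteq> 0 \<and> \<bar>q\<bar> \<le> Q \<and> \<bar>\<bar>real_of_int q\<bar> * (real_of_int q * \<alpha> - real_of_int p)\<bar> \<le> R}"
    (is "finite ?G")
proof -
  define P where "P = \<lceil>of_int Q * \<bar>\<alpha>\<bar> + R\<rceil>"
  have "?G \<subseteq> (\<lambda>(q, p). \<bar>real_of_int q\<bar> * (real_of_int q * \<alpha> - real_of_int p)) ` ({-Q..Q} \<times> {-P..P})"
  proof clarify
    fix q p :: int
    assume q: "q \<noteq> 0" "\<bar>q\<bar> \<le> Q" and bound: "\<bar>\<bar>real_of_int q\<bar> * (real_of_int q * \<alpha> - real_of_int p)\<bar> \<le> R"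
    have "1 \<le> \<bar>real_of_int q\<bar>"
      using q(1) by linarith
    then have "\<bar>real_of_int q * \<alpha> - real_of_int p\<bar> \<le> \<bar>real_of_int q\<bar> * \<bar>real_of_int q * \<alpha> - real_of_int p\<bar>"
      using mult_right_mono by fastforce
    with bound have "\<bar>real_of_int q * \<alpha> - real_of_int p\<bar> \<le> R"
      by (simp add: abs_mult)
    moreover have "\<bar>real_of_int q * \<alpha>\<bar> \<le> of_int Q * \<bar>\<alpha>\<bar>"
      using q(2) by (simp add: abs_mult mult_right_mono flip: of_int_abs)
    ultimately have "\<bar>real_of_int p\<bar> \<le> of_int Q * \<bar>\<alpha>\<bar> + R"
      by linarith
    then have "\<bar>p\<bar> \<le> P"
      unfolding P_def by linarith
    with q show "\<bar>real_of_int q\<bar> * (real_of_int q * \<alpha> - real_of_int p)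
        \<in> (\<lambda>(q, p). \<bar>real_of_int q\<bar> * (real_of_int q * \<alpha> - real_of_int p)) ` ({-Q..Q} \<times> {-P..P})"
      by (intro rev_image_eqI[of "(q, p)"]) (auto simp: abs_le_iff)
  qed
  then show ?thesis
    by (rule finite_subset) simp
qed

lemma islimpt_scaled_errors_large_denominator:
  assumes "x islimpt scaled_errors \<alpha>" and "\<delta> > 0"
  obtains q p where "q \<noteq> 0" and "Q < \<bar>q\<bar>"
    and "\<bar>\<bar>real_of_int q\<bar> * (real_of_int q * \<alpha> - real_of_int p) - x\<bar> < \<delta>"
proof -
  define G where "G = {\<bar>real_of_int q\<bar> * (real_of_int q * \<alpha> - real_of_int p) | q p.
     q \<noteq> 0 \<and> \<bar>q\<bar> \<le> Q \<and> \<bar>\<bar>real_of_int q\<bar> * (real_of_int q * \<alpha> - real_of_int p)\<bar> \<le> \<bar>x\<bar> + \<delta>}"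
  have "x islimpt (G \<union> (scaled_errors \<alpha> - G))"
    using assms(1) by (rule islimpt_subset) blast
  then have "x islimpt (scaled_errors \<alpha> - G)"
    using islimpt_Un_finite finite_bounded_scaled_errors unfolding G_def by blast
  then obtain y where "y \<in> scaled_errors \<alpha>" and "y \<notin> G" and close: "\<bar>y - x\<bar> < \<delta>"
    using \<open>\<delta> > 0\<close> unfolding islimpt_approachable_real by blast
  then obtain q p where "q \<noteq> 0" and y: "y = \<bar>real_of_int q\<bar> * (real_of_int q * \<alpha> - real_of_int p)"
    by (auto simp: scaled_errors_def)
  moreover have "\<bar>y\<bar> \<le> \<bar>x\<bar> + \<delta>"
    using close by linarith
  with \<open>y \<notin> G\<close> \<open>q \<noteq> 0\<close> have "Q < \<bar>q\<bar>"
    unfolding G_def y by force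
  ultimately show thesis
    using close that by blast
qed

lemma linear_form_eq_0_iff:
  assumes "\<beta> \<notin> \<rat>"
  shows "linear_form \<beta> p q = 0 \<longleftrightarrow> p = 0 \<and> q = 0"
proof
  assume zero: "linear_form \<beta> p q = 0"
  have "q = 0"
  proof (rule ccontr)
    assume "q \<noteq> 0"
    with zero have "\<beta> = of_int p / of_int q"
      by (simp add: linear_form_def field_simps)
    with assms show False
      by simp
  qed
  with zero show "p = 0 \<and> q = 0"
    by (simp add: linear_form_def)
qed (simp add: linear_form_def)

lemma norm_form_expand:
  "norm_form \<beta> \<beta>' p q = of_int p ^ 2 - (\<beta> + \<beta>') * of_int p * of_int q + \<beta> * \<beta>' * of_int q ^ 2"
  by (simp add: norm_form_def linear_form_def algebra_simps power2_eq_square)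

text \<open>With \<open>\<theta> = M(\<beta> - \<beta>')\<close>, multiplication by \<open>X + Y\<theta>\<close> maps \<open>\<int> + \<beta>\<int>\<close> into itself as soon as
  \<open>M(\<beta> + \<beta>')\<close> and \<open>M\<beta>\<beta>'\<close> are integers.\<close>

lemma unit_times_linear_form:
  fixes \<beta> \<beta>' :: real and M T N X Y p q :: int
  assumes "of_int M * (\<beta> + \<beta>') = of_int T" and "of_int M * (\<beta> * \<beta>') = of_int N"
  shows "(of_int X + of_int Y * (of_int M * (\<beta> - \<beta>'))) * linear_form \<beta> p q =
    linear_form \<beta> ((X - Y * T) * p + 2 * Y * N * q) ((X + Y * T) * q - 2 * Y * M * p)"
proof -
  have "(of_int X + of_int Y * (of_int M * (\<beta> - \<beta>'))) * linear_form \<beta> p q -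
      linear_form \<beta> ((X - Y * T) * p + 2 * Y * N * q) ((X + Y * T) * q - 2 * Y * M * p) =
    of_int Y * (of_int p + of_int q * \<beta>) * (of_int T - of_int M * (\<beta> + \<beta>')) +
      2 * of_int Y * of_int q * (of_int M * (\<beta> * \<beta>') - of_int N)"
    by (simp add: linear_form_def algebra_simps)
  with assms show ?thesis
    by simp
qed

lemma scaled_error_eq:
  assumes "\<beta> \<noteq> \<beta>'" and "q \<noteq> 0"
  shows "\<bar>real_of_int q\<bar> * (real_of_int q * \<beta> - real_of_int p) =
    of_int (sgn q) * ((linear_form \<beta> p q)\<^sup>2 - norm_form \<beta> \<beta>' p q) / (\<beta> - \<beta>')"
proof -
  have "(linear_form \<beta> p q)\<^sup>2 - norm_form \<beta> \<beta>' p q = - of_int q * linear_form \<beta> p q * (\<beta> - \<beta>')"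
    by (simp add: norm_form_def linear_form_def algebra_simps power2_eq_square)
  then have "of_int (sgn q) * ((linear_form \<beta> p q)\<^sup>2 - norm_form \<beta> \<beta>' p q) / (\<beta> - \<beta>') =
      - (of_int (sgn q) * of_int q) * linear_form \<beta> p q"
    using assms(1) by simp
  also have "of_int (sgn q) * of_int q = \<bar>real_of_int q\<bar>"
    by (simp add: sgn_if)
  finally show ?thesis
    by (simp add: linear_form_def algebra_simps)
qed

lemma norm_form_shift_mem_scaled_errors:
  assumes "\<beta> \<noteq> \<beta>'" and "q \<noteq> 0" and "\<sigma> \<in> {1, -1}"
  shows "\<sigma> * ((linear_form \<beta> p q)\<^sup>2 - norm_form \<beta> \<beta>' p q) / (\<beta> - \<beta>') \<in> scaled_errors \<beta>"
proof -
  define y where "y = \<bar>real_of_int q\<bar> * (real_of_int q * \<beta> - real_of_int p)"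
  have "y \<in> scaled_errors \<beta>" and "- y \<in> scaled_errors \<beta>"
    using assms(2) scaled_errors_uminus unfolding y_def scaled_errors_def by blast+
  moreover have "\<sigma> * ((linear_form \<beta> p q)\<^sup>2 - norm_form \<beta> \<beta>' p q) / (\<beta> - \<beta>') =
      (\<sigma> * of_int (sgn q)) * y"
    unfolding y_def scaled_error_eq[OF assms(1,2)] using assms(2) by (simp add: sgn_if)
  moreover have "\<sigma> * of_int (sgn q) \<in> {1, -1}"
    using assms(2,3) by (auto simp: sgn_if)
  ultimately show ?thesis
    by auto
qed

lemma linear_form_small:
  assumes "q \<noteq> 0" and bound: "\<bar>\<bar>real_of_int q\<bar> * (real_of_int q * \<beta> - real_of_int p)\<bar> \<le> R"
  shows "\<bar>real_of_int q\<bar> * \<bar>linear_form \<beta> p q\<bar> \<le> R"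
    and "\<bar>linear_form \<beta> p q\<bar> \<le> R"
    and "(linear_form \<beta> p q)\<^sup>2 \<le> R\<^sup>2 / \<bar>real_of_int q\<bar>"
proof -
  define \<xi> where "\<xi> = linear_form \<beta> p q"
  have q1: "1 \<le> \<bar>real_of_int q\<bar>"
    using assms(1) by linarith
  show q\<xi>: "\<bar>real_of_int q\<bar> * \<bar>linear_form \<beta> p q\<bar> \<le> R"
    using bound by (simp add: linear_form_def abs_mult abs_minus_commute)
  moreover have "\<bar>\<xi>\<bar> \<le> \<bar>real_of_int q\<bar> * \<bar>\<xi>\<bar>"
    using mult_right_mono[OF q1] by fastforce
  ultimately show \<xi>R: "\<bar>linear_form \<beta> p q\<bar> \<le> R"
    unfolding \<xi>_def by linarith
  have "\<xi>\<^sup>2 * \<bar>real_of_int q\<bar> = \<bar>\<xi>\<bar> * (\<bar>real_of_int q\<bar> * \<bar>\<xi>\<bar>)"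
    by (simp add: power2_eq_square)
  also have "\<dots> \<le> R * R"
    using \<xi>R q\<xi> unfolding \<xi>_def by (intro mult_mono) auto
  finally show "(linear_form \<beta> p q)\<^sup>2 \<le> R\<^sup>2 / \<bar>real_of_int q\<bar>"
    using q1 by (simp add: \<xi>_def field_simps power2_eq_square)
qed

lemma norm_form_bound:
  assumes "q \<noteq> 0" and bound: "\<bar>\<bar>real_of_int q\<bar> * (real_of_int q * \<beta> - real_of_int p)\<bar> \<le> R"
  shows "\<bar>norm_form \<beta> \<beta>' p q\<bar> \<le> R\<^sup>2 + R * \<bar>\<beta> - \<beta>'\<bar>"
proof -
  define \<xi> where "\<xi> = linear_form \<beta> p q"
  note small = linear_form_small[OF assms, folded \<xi>_def]
  have "\<xi>\<^sup>2 \<le> R\<^sup>2"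
    using power_mono[OF small(2) abs_ge_zero, of 2] by simp
  have "norm_form \<beta> \<beta>' p q = \<xi>\<^sup>2 + of_int q * \<xi> * (\<beta> - \<beta>')"
    by (simp add: \<xi>_def norm_form_def linear_form_def algebra_simps power2_eq_square)
  then have "\<bar>norm_form \<beta> \<beta>' p q\<bar> \<le> \<xi>\<^sup>2 + (\<bar>real_of_int q\<bar> * \<bar>\<xi>\<bar>) * \<bar>\<beta> - \<beta>'\<bar>"
    by (simp add: abs_mult) (metis abs_triangle_ineq abs_mult abs_power2)
  also have "\<dots> \<le> R\<^sup>2 + R * \<bar>\<beta> - \<beta>'\<bar>"
    using \<open>\<xi>\<^sup>2 \<le> R\<^sup>2\<close> small(1) by (intro add_mono mult_right_mono) auto
  finally show ?thesis .
qed

lemma scaled_error_near_norm_value: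
  assumes "\<beta> \<noteq> \<beta>'" and "q \<noteq> 0"
    and bound: "\<bar>\<bar>real_of_int q\<bar> * (real_of_int q * \<beta> - real_of_int p)\<bar> \<le> R"
  shows "\<bar>\<bar>real_of_int q\<bar> * (real_of_int q * \<beta> - real_of_int p) + of_int (sgn q) * norm_form \<beta> \<beta>' p q / (\<beta> - \<beta>')\<bar>
      \<le> R\<^sup>2 / (\<bar>real_of_int q\<bar> * \<bar>\<beta> - \<beta>'\<bar>)"
proof -
  have "\<bar>real_of_int q\<bar> * (real_of_int q * \<beta> - real_of_int p) + of_int (sgn q) * norm_form \<beta> \<beta>' p q / (\<beta> - \<beta>')
      = of_int (sgn q) * (linear_form \<beta> p q)\<^sup>2 / (\<beta> - \<beta>')"
    unfolding scaled_error_eq[OF assms(1,2)] by (simp add: diff_divide_distrib algebra_simps)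
  also have "\<bar>\<dots>\<bar> = (linear_form \<beta> p q)\<^sup>2 / \<bar>\<beta> - \<beta>'\<bar>"
    using assms(2) by (simp add: abs_mult sgn_if)
  also have "\<dots> \<le> R\<^sup>2 / (\<bar>real_of_int q\<bar> * \<bar>\<beta> - \<beta>'\<bar>)"
    using linear_form_small(3)[OF assms(2,3)] assms(1)
    by (simp add: divide_right_mono flip: divide_divide_eq_left)
  finally show ?thesis .
qed

lemma Rats_common_denominator:
  fixes x y :: real
  assumes "x \<in> \<rat>" and "y \<in> \<rat>"
  obtains M T N :: int where "M > 0" and "of_int M * x = of_int T" and "of_int M * y = of_int N"
proof -
  obtain a b where "b > 0" and x: "x = of_int a / of_int b"
    using assms(1) by (auto elim: Rats_cases')
  obtain c d where "d > 0" and y: "y = of_int c / of_int d"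
    using assms(2) by (auto elim: Rats_cases')
  show thesis
  proof (rule that[of "b * d" "a * d" "c * b"])
    show "b * d > 0"
      using \<open>b > 0\<close> \<open>d > 0\<close> by simp
    show "of_int (b * d) * x = of_int (a * d)" and "of_int (b * d) * y = of_int (c * b)"
      using \<open>b > 0\<close> \<open>d > 0\<close> by (simp_all add: x y field_simps)
  qed
qed

lemma finite_bounded_fractions:
  assumes "L \<noteq> 0"
  shows "finite {x :: real. of_int L * x \<in> \<int> \<and> \<bar>x\<bar> \<le> B}"
proof -
  define K where "K = \<lceil>\<bar>of_int L\<bar> * B\<rceil>"
  have "{x :: real. of_int L * x \<in> \<int> \<and> \<bar>x\<bar> \<le> B} \<subseteq> (\<lambda>n. of_int n / of_int L) ` {-K..K}"
  proof clarify
    fix x :: real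
    assume "of_int L * x \<in> \<int>" and "\<bar>x\<bar> \<le> B"
    then obtain n where n: "of_int L * x = of_int n"
      by (auto elim: Ints_cases)
    have "\<bar>real_of_int n\<bar> = \<bar>of_int L\<bar> * \<bar>x\<bar>"
      unfolding n[symmetric] by (simp add: abs_mult)
    also have "\<dots> \<le> \<bar>of_int L\<bar> * B"
      using \<open>\<bar>x\<bar> \<le> B\<close> by (intro mult_left_mono) auto
    finally have "n \<in> {-K..K}"
      unfolding K_def by (simp add: abs_le_iff) linarith
    moreover have "x = of_int n / of_int L"
      using n assms by (simp add: field_simps)
    ultimately show "x \<in> (\<lambda>n. of_int n / of_int L) ` {-K..K}"
      by blast
  qed
  then show ?thesis
    by (rule finite_subset) simp
qed

lemma square_scaled_difference:
  fixes \<beta> \<beta>' :: real and M T N :: int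
  assumes "of_int M * (\<beta> + \<beta>') = of_int T" and "of_int M * (\<beta> * \<beta>') = of_int N"
  shows "(of_int M * (\<beta> - \<beta>'))\<^sup>2 = of_int (T\<^sup>2 - 4 * M * N)"
proof -
  have "(of_int M * (\<beta> - \<beta>'))\<^sup>2 = (of_int M * (\<beta> + \<beta>'))\<^sup>2 - 4 * of_int M * (of_int M * (\<beta> * \<beta>'))"
    by (simp add: algebra_simps power2_eq_square)
  then show ?thesis
    unfolding assms by simp
qed

lemma eventually_nonzero_denominator:
  assumes "(\<lambda>k. linear_form \<beta> (P k) (Q k)) \<longlonglongrightarrow> 0" and "\<And>k. linear_form \<beta> (P k) (Q k) \<noteq> 0"
  shows "\<forall>\<^sub>F k in sequentially. Q k \<noteq> 0"
proof -
  have "\<forall>\<^sub>F k in sequentially. \<bar>linear_form \<beta> (P k) (Q k)\<bar> < 1"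
    using assms(1) by (rule order_tendstoD(2)[OF tendsto_rabs_zero]) simp
  moreover have "Q k \<noteq> 0" if "\<bar>linear_form \<beta> (P k) (Q k)\<bar> < 1" for k
  proof
    assume "Q k = 0"
    with that assms(2)[of k] show False
      by (simp add: linear_form_def)
  qed
  ultimately show ?thesis
    by (rule eventually_mono)
qed

lemma islimpt_of_eventually_in:
  fixes c :: "'a :: first_countable_topology"
  assumes "f \<longlonglongrightarrow> c" and "\<And>k. f k \<noteq> c" and "\<forall>\<^sub>F k in sequentially. f k \<in> S"
  shows "c islimpt S"
proof -
  obtain K where "\<And>k. k \<ge> K \<Longrightarrow> f k \<in> S"
    using assms(3) unfolding eventually_sequentially by blast
  moreover have "(\<lambda>k. f (k + K)) \<longlonglongrightarrow> c"
    using assms(1) by (rule LIMSEQ_ignore_initial_segment)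
  ultimately show ?thesis
    unfolding islimpt_sequential using assms(2)
    by (intro exI[of _ "\<lambda>k. f (k + K)"]) auto
qed

section \<open>Accumulation points for a quadratic irrational\<close>

locale quadratic_conjugates =
  fixes \<alpha> \<alpha>' :: real
  assumes irrational: "\<alpha> \<notin> \<rat>"
    and sum_Rats: "\<alpha> + \<alpha>' \<in> \<rat>"
    and prod_Rats: "\<alpha> * \<alpha>' \<in> \<rat>"
begin

lemma conjugates_distinct: "\<alpha> \<noteq> \<alpha>'"
proof
  assume "\<alpha> = \<alpha>'"
  then have "\<alpha> = (\<alpha> + \<alpha>') / 2"
    by simp
  also have "\<dots> \<in> \<rat>"
    using sum_Rats by simp
  finally show False
    using irrational by simp
qed

lemma norm_form_denominator:
  obtains L :: int where "L > 0" and "\<And>p q. of_int L * norm_form \<alpha> \<alpha>' p q \<in> \<int>"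
proof -
  obtain M T N where "M > 0" and T: "of_int M * (\<alpha> + \<alpha>') = of_int T"
    and N: "of_int M * (\<alpha> * \<alpha>') = of_int N"
    using Rats_common_denominator[OF sum_Rats prod_Rats] .
  have "of_int M * norm_form \<alpha> \<alpha>' p q =
      of_int M * of_int p ^ 2 - of_int M * (\<alpha> + \<alpha>') * of_int p * of_int q
        + of_int M * (\<alpha> * \<alpha>') * of_int q ^ 2" for p q
    by (simp add: norm_form_expand algebra_simps)
  then have "of_int M * norm_form \<alpha> \<alpha>' p q = of_int (M * p ^ 2 - T * p * q + N * q ^ 2)" for p q
    by (simp add: T N)
  with \<open>M > 0\<close> show thesis
    by (metis Ints_of_int that)
qed

lemma scaled_difference_irrational:
  assumes "M \<noteq> 0"
  shows "of_int M * (\<alpha> - \<alpha>') \<notin> \<rat>"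
proof
  assume "of_int M * (\<alpha> - \<alpha>') \<in> \<rat>"
  have "\<alpha> = (of_int M * (\<alpha> - \<alpha>') + of_int M * (\<alpha> + \<alpha>')) / (2 * of_int M)"
    using assms by (simp add: field_simps)
  also have "\<dots> \<in> \<rat>"
    using \<open>of_int M * (\<alpha> - \<alpha>') \<in> \<rat>\<close> sum_Rats by simp
  finally show False
    using irrational by simp
qed

lemma unit_action:
  obtains \<epsilon> where "0 < \<epsilon>" and "\<epsilon> < 1"
    and "\<And>p q. \<exists>p' q'. linear_form \<alpha> p' q' = \<epsilon> * linear_form \<alpha> p q \<and>
      linear_form \<alpha>' p' q' = linear_form \<alpha>' p q / \<epsilon>"
proof -
  obtain M T N where "M > 0" and T: "of_int M * (\<alpha> + \<alpha>') = of_int T"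
    and N: "of_int M * (\<alpha> * \<alpha>') = of_int N"
    using Rats_common_denominator[OF sum_Rats prod_Rats] .
  define \<theta> where "\<theta> = of_int M * (\<alpha> - \<alpha>')"
  have square: "\<theta>\<^sup>2 = of_int (T\<^sup>2 - 4 * M * N)"
    unfolding \<theta>_def using T N by (rule square_scaled_difference)
  obtain X Y where pell: "X\<^sup>2 - (T\<^sup>2 - 4 * M * N) * Y\<^sup>2 = 1"
    and \<epsilon>: "0 < X + Y * \<theta>" "X + Y * \<theta> < 1"
    using pell_unit_in_unit_interval[OF scaled_difference_irrational square[unfolded \<theta>_def]]
      \<open>M > 0\<close> unfolding \<theta>_def by auto
  define \<epsilon> where "\<epsilon> = of_int X + of_int Y * \<theta>"
  have "\<epsilon> * (of_int X - of_int Y * \<theta>) = (of_int X)\<^sup>2 - (of_int Y)\<^sup>2 * \<theta>\<^sup>2"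
    by (simp add: \<epsilon>_def algebra_simps power2_eq_square)
  also have "\<dots> = of_int (X\<^sup>2 - (T\<^sup>2 - 4 * M * N) * Y\<^sup>2)"
    unfolding square by (simp add: algebra_simps)
  also have "\<dots> = 1"
    unfolding pell by simp
  finally have conj: "of_int X + of_int Y * (of_int M * (\<alpha>' - \<alpha>)) = 1 / \<epsilon>"
    using \<epsilon> by (simp add: \<epsilon>_def \<theta>_def field_simps)
  have T': "of_int M * (\<alpha>' + \<alpha>) = of_int T" and N': "of_int M * (\<alpha>' * \<alpha>) = of_int N"
    using T N by (simp_all add: ac_simps)
  show thesis
  proof (rule that)
    show "0 < \<epsilon>" and "\<epsilon> < 1"
      using \<epsilon> unfolding \<epsilon>_def by simp_all
    fix p q
    show "\<exists>p' q'. linear_form \<alpha> p' q' = \<epsilon> * linear_form \<alpha> p q \<and>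
        linear_form \<alpha>' p' q' = linear_form \<alpha>' p q / \<epsilon>"
      using unit_times_linear_form[OF T N, of X Y p q] unit_times_linear_form[OF T' N', of X Y p q]
      unfolding conj by (auto simp: \<epsilon>_def \<theta>_def)
  qed
qed

lemma unit_orbit:
  obtains \<epsilon> where "0 < \<epsilon>" and "\<epsilon> < 1"
    and "\<And>p q k. \<exists>p' q'. linear_form \<alpha> p' q' = \<epsilon> ^ k * linear_form \<alpha> p q \<and>
      norm_form \<alpha> \<alpha>' p' q' = norm_form \<alpha> \<alpha>' p q"
proof -
  obtain \<epsilon> where \<epsilon>: "0 < \<epsilon>" "\<epsilon> < 1"
    and step: "\<And>p q. \<exists>p' q'. linear_form \<alpha> p' q' = \<epsilon> * linear_form \<alpha> p q \<and>
      linear_form \<alpha>' p' q' = linear_form \<alpha>' p q / \<epsilon>"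
    using unit_action by blast
  have orbit: "\<exists>p' q'. linear_form \<alpha> p' q' = \<epsilon> ^ k * linear_form \<alpha> p q \<and>
      linear_form \<alpha>' p' q' = linear_form \<alpha>' p q / \<epsilon> ^ k" for p q k
  proof (induction k)
    case 0
    show ?case
      by (intro exI[of _ p] exI[of _ q]) simp
  next
    case (Suc k)
    then obtain p1 q1 where "linear_form \<alpha> p1 q1 = \<epsilon> ^ k * linear_form \<alpha> p q"
      and "linear_form \<alpha>' p1 q1 = linear_form \<alpha>' p q / \<epsilon> ^ k"
      by blast
    moreover obtain p2 q2 where "linear_form \<alpha> p2 q2 = \<epsilon> * linear_form \<alpha> p1 q1"
      and "linear_form \<alpha>' p2 q2 = linear_form \<alpha>' p1 q1 / \<epsilon>"
      using step by blast
    ultimately show ?case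
      by (auto simp: field_simps)
  qed
  show thesis
  proof (rule that[OF \<epsilon>])
    fix p q k
    obtain p' q' where \<xi>: "linear_form \<alpha> p' q' = \<epsilon> ^ k * linear_form \<alpha> p q"
      and \<xi>': "linear_form \<alpha>' p' q' = linear_form \<alpha>' p q / \<epsilon> ^ k"
      using orbit by blast
    have "norm_form \<alpha> \<alpha>' p' q' = norm_form \<alpha> \<alpha>' p q"
      using \<epsilon> by (simp add: norm_form_def \<xi> \<xi>')
    with \<xi> show "\<exists>p' q'. linear_form \<alpha> p' q' = \<epsilon> ^ k * linear_form \<alpha> p q \<and>
        norm_form \<alpha> \<alpha>' p' q' = norm_form \<alpha> \<alpha>' p q"
      by blast
  qed
qed

lemma norm_value_islimpt:
  assumes "(p, q) \<noteq> (0, 0)" and "\<sigma> \<in> {1, -1}"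
  shows "\<sigma> * norm_form \<alpha> \<alpha>' p q / (\<alpha> - \<alpha>') islimpt scaled_errors \<alpha>"
proof -
  obtain \<epsilon> where \<epsilon>: "0 < \<epsilon>" "\<epsilon> < 1"
    and orbit: "\<And>k. \<exists>p' q'. linear_form \<alpha> p' q' = \<epsilon> ^ k * linear_form \<alpha> p q \<and>
      norm_form \<alpha> \<alpha>' p' q' = norm_form \<alpha> \<alpha>' p q"
    using unit_orbit by metis
  then obtain P Q where \<xi>: "\<And>k. linear_form \<alpha> (P k) (Q k) = \<epsilon> ^ k * linear_form \<alpha> p q"
    and norm: "\<And>k. norm_form \<alpha> \<alpha>' (P k) (Q k) = norm_form \<alpha> \<alpha>' p q"
    by metis
  define f where "f k = - \<sigma> * ((linear_form \<alpha> (P k) (Q k))\<^sup>2 - norm_form \<alpha> \<alpha>' (P k) (Q k)) / (\<alpha> - \<alpha>')"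
    for k
  have "linear_form \<alpha> p q \<noteq> 0"
    using assms(1) linear_form_eq_0_iff[OF irrational] by simp
  then have \<xi>_nonzero: "linear_form \<alpha> (P k) (Q k) \<noteq> 0" for k
    using \<epsilon> by (simp add: \<xi>)
  have \<xi>_to_0: "(\<lambda>k. linear_form \<alpha> (P k) (Q k)) \<longlonglongrightarrow> 0"
    unfolding \<xi> using \<epsilon> by (intro tendsto_mult_left_zero LIMSEQ_power_zero) auto
  then have "f \<longlonglongrightarrow> - \<sigma> * (0\<^sup>2 - norm_form \<alpha> \<alpha>' p q) / (\<alpha> - \<alpha>')"
    unfolding f_def norm using conjugates_distinct by (intro tendsto_intros) auto
  moreover have "f k \<noteq> - \<sigma> * (0\<^sup>2 - norm_form \<alpha> \<alpha>' p q) / (\<alpha> - \<alpha>')" for k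
    using \<xi>_nonzero[of k] conjugates_distinct assms(2)
    by (auto simp: f_def norm diff_divide_distrib)
  moreover have "\<forall>\<^sub>F k in sequentially. f k \<in> scaled_errors \<alpha>"
    using eventually_nonzero_denominator[OF \<xi>_to_0 \<xi>_nonzero]
  proof (rule eventually_mono)
    show "f k \<in> scaled_errors \<alpha>" if "Q k \<noteq> 0" for k
      unfolding f_def using conjugates_distinct that assms(2)
      by (intro norm_form_shift_mem_scaled_errors) auto
  qed
  ultimately show ?thesis
    by (auto dest: islimpt_of_eventually_in)
qed

lemma finite_bounded_norm_values:
  "finite {\<sigma> * norm_form \<alpha> \<alpha>' p q / (\<alpha> - \<alpha>') | \<sigma> p q.
    \<sigma> \<in> {1, -1} \<and> (p, q) \<noteq> (0, 0) \<and> \<bar>norm_form \<alpha> \<alpha>' p q\<bar> \<le> B}" (is "finite ?C")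
proof -
  obtain L where "L > 0" and L: "\<And>p q. of_int L * norm_form \<alpha> \<alpha>' p q \<in> \<int>"
    using norm_form_denominator by blast
  define F where "F = {n. of_int L * n \<in> \<int> \<and> \<bar>n\<bar> \<le> B}"
  have "?C \<subseteq> (\<lambda>(\<sigma>, n). \<sigma> * n / (\<alpha> - \<alpha>')) ` ({1, -1} \<times> F)"
  proof
    fix c
    assume "c \<in> ?C"
    then obtain \<sigma> p q where "\<sigma> \<in> {1, -1}" and "\<bar>norm_form \<alpha> \<alpha>' p q\<bar> \<le> B"
      and c: "c = \<sigma> * norm_form \<alpha> \<alpha>' p q / (\<alpha> - \<alpha>')"
      by blast
    with L show "c \<in> (\<lambda>(\<sigma>, n). \<sigma> * n / (\<alpha> - \<alpha>')) ` ({1, -1} \<times> F)"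
      unfolding F_def by (intro rev_image_eqI[of "(\<sigma>, norm_form \<alpha> \<alpha>' p q)"]) auto
  qed
  moreover have "finite F"
    unfolding F_def using \<open>L > 0\<close> by (intro finite_bounded_fractions) simp
  then have "finite ((\<lambda>(\<sigma>, n). \<sigma> * n / (\<alpha> - \<alpha>')) ` ({1, -1} \<times> F))"
    by simp
  ultimately show ?thesis
    by (rule finite_subset)
qed

lemma islimpt_near_norm_value:
  assumes "x islimpt scaled_errors \<alpha>" and "e > 0"
  obtains \<sigma> p q where "\<sigma> \<in> {1, -1}" and "(p, q) \<noteq> (0, 0)"
    and "\<bar>norm_form \<alpha> \<alpha>' p q\<bar> \<le> (\<bar>x\<bar> + 1)\<^sup>2 + (\<bar>x\<bar> + 1) * \<bar>\<alpha> - \<alpha>'\<bar>"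
    and "\<bar>\<sigma> * norm_form \<alpha> \<alpha>' p q / (\<alpha> - \<alpha>') - x\<bar> < e"
proof -
  define R where "R = \<bar>x\<bar> + 1"
  define d where "d = \<alpha> - \<alpha>'"
  have "d \<noteq> 0"
    using conjugates_distinct by (simp add: d_def)
  obtain Q :: nat where Q: "2 * R\<^sup>2 / (e * \<bar>d\<bar>) < real Q"
    using reals_Archimedean2 by blast
  obtain q p where "q \<noteq> 0" and "int Q < \<bar>q\<bar>"
    and close: "\<bar>\<bar>real_of_int q\<bar> * (real_of_int q * \<alpha> - real_of_int p) - x\<bar> < min 1 (e / 2)"
    using islimpt_scaled_errors_large_denominator[OF assms(1), of "min 1 (e / 2)"] \<open>e > 0\<close> by auto
  define y where "y = \<bar>real_of_int q\<bar> * (real_of_int q * \<alpha> - real_of_int p)"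
  have y_close: "\<bar>y - x\<bar> < min 1 (e / 2)"
    unfolding y_def by (rule close)
  then have bound: "\<bar>\<bar>real_of_int q\<bar> * (real_of_int q * \<alpha> - real_of_int p)\<bar> \<le> R"
    unfolding R_def y_def by linarith
  have "2 * R\<^sup>2 < e * \<bar>d\<bar> * real Q"
    using Q \<open>e > 0\<close> \<open>d \<noteq> 0\<close> by (simp add: field_simps)
  also have "\<dots> \<le> e * \<bar>d\<bar> * \<bar>real_of_int q\<bar>"
    using \<open>int Q < \<bar>q\<bar>\<close> \<open>e > 0\<close> by (intro mult_left_mono) auto
  finally have "R\<^sup>2 / (\<bar>real_of_int q\<bar> * \<bar>d\<bar>) < e / 2"
    using \<open>q \<noteq> 0\<close> \<open>d \<noteq> 0\<close> by (simp add: field_simps)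
  moreover define c where "c = - of_int (sgn q) * norm_form \<alpha> \<alpha>' p q / d"
  have "\<bar>y - c\<bar> \<le> R\<^sup>2 / (\<bar>real_of_int q\<bar> * \<bar>d\<bar>)"
    using scaled_error_near_norm_value[OF conjugates_distinct \<open>q \<noteq> 0\<close> bound]
    by (simp add: y_def c_def d_def)
  ultimately have "\<bar>c - x\<bar> < e"
    using y_close by linarith
  moreover have "(p, q) \<noteq> (0, 0)" and "- of_int (sgn q) \<in> {1, -1 :: real}"
    using \<open>q \<noteq> 0\<close> by (auto simp: sgn_if)
  ultimately show thesis
    using that norm_form_bound[OF \<open>q \<noteq> 0\<close> bound] unfolding R_def c_def d_def by blast
qed

text \<open>Near \<open>x\<close> there are only finitely many candidate values, so approximating \<open>x\<close> arbitrarily well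
  by them forces \<open>x\<close> to be one of them.\<close>

lemma islimpt_imp_norm_value:
  assumes "x islimpt scaled_errors \<alpha>"
  shows "\<exists>\<sigma> p q. \<sigma> \<in> {1, -1} \<and> (p, q) \<noteq> (0, 0) \<and> x = \<sigma> * norm_form \<alpha> \<alpha>' p q / (\<alpha> - \<alpha>')"
proof -
  define C where "C = {\<sigma> * norm_form \<alpha> \<alpha>' p q / (\<alpha> - \<alpha>') | \<sigma> p q.
    \<sigma> \<in> {1, -1} \<and> (p, q) \<noteq> (0, 0) \<and>
    \<bar>norm_form \<alpha> \<alpha>' p q\<bar> \<le> (\<bar>x\<bar> + 1)\<^sup>2 + (\<bar>x\<bar> + 1) * \<bar>\<alpha> - \<alpha>'\<bar>}"
  have "x \<in> closure C"
    unfolding closure_approachable dist_real_def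
  proof (intro allI impI)
    fix e :: real
    assume "e > 0"
    then obtain \<sigma> p q where "\<sigma> \<in> {1, -1}" and "(p, q) \<noteq> (0, 0)"
      and "\<bar>norm_form \<alpha> \<alpha>' p q\<bar> \<le> (\<bar>x\<bar> + 1)\<^sup>2 + (\<bar>x\<bar> + 1) * \<bar>\<alpha> - \<alpha>'\<bar>"
      and "\<bar>\<sigma> * norm_form \<alpha> \<alpha>' p q / (\<alpha> - \<alpha>') - x\<bar> < e"
      by (rule islimpt_near_norm_value[OF assms])
    then show "\<exists>c \<in> C. \<bar>c - x\<bar> < e"
      unfolding C_def by blast
  qed
  moreover have "finite C"
    unfolding C_def by (rule finite_bounded_norm_values)
  ultimately have "x \<in> C"
    by (simp add: finite_imp_closed closure_closed)
  then show ?thesis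
    unfolding C_def by blast
qed

theorem A1_eq_norm_values:
  "A1 \<alpha> = {\<sigma> * norm_form \<alpha> \<alpha>' p q / (\<alpha> - \<alpha>') | \<sigma> p q. \<sigma> \<in> {1, -1} \<and> (p, q) \<noteq> (0, 0)}"
  unfolding A1_eq_limit_points using islimpt_imp_norm_value norm_value_islimpt by blast

end

section \<open>Real quadratic fields and the dual lattice\<close>

lemma sqrt_squarefree_irrational:
  fixes D :: int
  assumes "D \<ge> 2" and "squarefree D"
  shows "sqrt (of_int D) \<notin> \<rat>"
proof
  assume "sqrt (of_int D) \<in> \<rat>"
  then obtain m n :: nat where "n \<noteq> 0" and sqrt_eq: "\<bar>sqrt (of_int D)\<bar> = real m / real n"
    and "coprime m n"
    by (rule Rats_abs_nat_div_natE)
  then have "real m = real n * sqrt (of_int D)"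
    using assms(1) by (simp add: field_simps)
  then have "real_of_int D * real n ^ 2 = real m ^ 2"
    using assms(1) by (simp add: power_mult_distrib)
  then have "real_of_int (D * int n ^ 2) = real_of_int (int m ^ 2)"
    by simp
  then have D_eq: "D * int n ^ 2 = int m ^ 2"
    by (simp only: of_int_eq_iff)
  then have "int n ^ 2 dvd int m ^ 2"
    unfolding dvd_def by (metis mult.commute)
  then have "n dvd m"
    by (simp add: pow_divides_pow_iff)
  with \<open>coprime m n\<close> have "is_unit n"
    by (rule coprime_common_divisor) simp
  with D_eq have "D = int m ^ 2"
    by simp
  with assms(2) have "is_unit (int m)"
    using squarefreeD[of D "int m"] by simp
  with \<open>D = int m ^ 2\<close> assms(1) show False
    by simp
qed

lemma quadratic_conjugates_sqrt:
  fixes a b :: rat and D :: int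
  assumes "b \<noteq> 0" and "D \<ge> 2" and "squarefree D"
  shows "quadratic_conjugates (of_rat a + of_rat b * sqrt (of_int D)) (of_rat a - of_rat b * sqrt (of_int D))"
proof
  have "sqrt (of_int D) \<notin> \<rat>"
    using sqrt_squarefree_irrational assms(2,3) .
  show "of_rat a + of_rat b * sqrt (of_int D) \<notin> \<rat>"
  proof
    assume rational: "of_rat a + of_rat b * sqrt (of_int D) \<in> \<rat>"
    have "sqrt (of_int D) = (of_rat a + of_rat b * sqrt (of_int D) - of_rat a) / of_rat b"
      using assms(1) by simp
    also have "\<dots> \<in> \<rat>"
      using rational by (intro Rats_divide Rats_diff) auto
    finally show False
      using \<open>sqrt (of_int D) \<notin> \<rat>\<close> by simp
  qed
  show "(of_rat a + of_rat b * sqrt (of_int D)) + (of_rat a - of_rat b * sqrt (of_int D)) \<in> \<rat>"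
    by simp
  have "(of_rat a + of_rat b * sqrt (of_int D)) * (of_rat a - of_rat b * sqrt (of_int D)) =
      (of_rat a)\<^sup>2 - (of_rat b)\<^sup>2 * (sqrt (of_int D))\<^sup>2"
    by (simp add: algebra_simps power2_eq_square)
  also have "\<dots> = of_rat (a\<^sup>2 - b\<^sup>2 * of_int D)"
    using assms(2) by (simp add: of_rat_diff of_rat_mult of_rat_power)
  finally show "(of_rat a + of_rat b * sqrt (of_int D)) * (of_rat a - of_rat b * sqrt (of_int D)) \<in> \<rat>"
    by simp
qed

text \<open>The element \<open>s\<close> of \<open>K\<close> with \<open>Tr s = q\<close> and \<open>Tr (s\<alpha>) = p\<close>.\<close>

definition dual_of_traces :: "int \<Rightarrow> rat \<Rightarrow> rat \<Rightarrow> int \<Rightarrow> int \<Rightarrow> rat \<times> rat" where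
  "dual_of_traces D a b p q = (of_int q / 2, (of_int p - of_int q * a) / (2 * b * of_int D))"

lemma dual_lattice_eq_range:
  assumes "b \<noteq> 0" and "D \<noteq> 0"
  shows "dual_lattice D a b = range (case_prod (dual_of_traces D a b))"
proof (intro equalityI subsetI)
  fix s
  assume "s \<in> dual_lattice D a b"
  then obtain q p where "2 * fst s = of_int q" and "2 * (fst s * a + of_int D * snd s * b) = of_int p"
    by (auto simp: dual_lattice_def qf_trace_def qf_mult_def elim!: Ints_cases)
  then have "s = dual_of_traces D a b p q"
    using assms by (auto simp: dual_of_traces_def prod_eq_iff field_simps)
  then show "s \<in> range (case_prod (dual_of_traces D a b))"
    by auto
next
  fix s
  assume "s \<in> range (case_prod (dual_of_traces D a b))"
  then obtain p q where s: "s = dual_of_traces D a b p q"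
    by auto
  then have "qf_trace s = of_int q" and "qf_trace (qf_mult D s (a, b)) = of_int p"
    using assms by (simp_all add: dual_of_traces_def qf_trace_def qf_mult_def field_simps)
  then show "s \<in> dual_lattice D a b"
    by (simp add: dual_lattice_def)
qed

lemma dual_of_traces_eq_0_iff:
  assumes "b \<noteq> 0" and "D \<noteq> 0"
  shows "dual_of_traces D a b p q = (0, 0) \<longleftrightarrow> (p, q) = (0, 0)"
  using assms by (auto simp: dual_of_traces_def)

lemma qf_norm_dual_of_traces:
  fixes a b :: rat and D :: int
  assumes "b \<noteq> 0" and "D > 0"
  shows "2 * of_rat b * sqrt (of_int D) * of_rat (qf_norm D (dual_of_traces D a b p q)) =
    - norm_form (of_rat a + of_rat b * sqrt (of_int D)) (of_rat a - of_rat b * sqrt (of_int D)) p q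
      / (2 * of_rat b * sqrt (of_int D))"
proof -
  define n where "n = (of_int p - of_int q * a)\<^sup>2 - (of_int q * b)\<^sup>2 * of_int D"
  have "norm_form (of_rat a + of_rat b * sqrt (of_int D)) (of_rat a - of_rat b * sqrt (of_int D)) p q =
      (of_int p - of_int q * of_rat a)\<^sup>2 - (of_int q * of_rat b)\<^sup>2 * (sqrt (of_int D))\<^sup>2"
    by (simp add: norm_form_def linear_form_def algebra_simps power2_eq_square)
  also have "\<dots> = of_rat n"
    using assms(2) by (simp add: n_def of_rat_diff of_rat_mult of_rat_power)
  finally have norm: "norm_form (of_rat a + of_rat b * sqrt (of_int D)) (of_rat a - of_rat b * sqrt (of_int D)) p q =
      of_rat n" .
  have "qf_norm D (dual_of_traces D a b p q) = - n / (4 * b\<^sup>2 * of_int D)"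
    using assms by (simp add: qf_norm_def dual_of_traces_def n_def field_simps power2_eq_square)
  then have "of_rat (qf_norm D (dual_of_traces D a b p q)) = - of_rat n / (2 * of_rat b * sqrt (of_int D))\<^sup>2"
    using assms(2)
    by (simp add: of_rat_minus of_rat_divide of_rat_mult of_rat_power power_mult_distrib)
  then show ?thesis
    unfolding norm using assms by (simp add: power2_eq_square)
qed

lemma dual_lattice_norm_values:
  fixes a b :: rat and D :: int
  assumes "b \<noteq> 0" and "D > 0"
  shows "{\<sigma> * 2 * of_rat b * sqrt (of_int D) * of_rat (qf_norm D s) | \<sigma> s.
       \<sigma> \<in> {1, -1} \<and> s \<in> dual_lattice D a b \<and> s \<noteq> (0, 0)} =
    {\<sigma> * norm_form (of_rat a + of_rat b * sqrt (of_int D)) (of_rat a - of_rat b * sqrt (of_int D)) p q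
       / (2 * of_rat b * sqrt (of_int D)) | \<sigma> p q. \<sigma> \<in> {1, -1} \<and> (p, q) \<noteq> (0, 0)}"
    (is "?L = ?R")
proof (intro equalityI subsetI)
  let ?N = "norm_form (of_rat a + of_rat b * sqrt (of_int D)) (of_rat a - of_rat b * sqrt (of_int D))"
  have D: "D \<noteq> 0"
    using assms(2) by simp
  have norm_dual: "\<sigma> * 2 * of_rat b * sqrt (of_int D) * of_rat (qf_norm D (dual_of_traces D a b p q)) =
      - \<sigma> * ?N p q / (2 * of_rat b * sqrt (of_int D))" for \<sigma> p q
    using qf_norm_dual_of_traces[OF assms, of a p q] by (simp add: mult.assoc)
  have sign: "- \<sigma> \<in> {1, -1 :: real}" if "\<sigma> \<in> {1, -1}" for \<sigma> :: real
    using that by auto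
  {
    fix x
    assume "x \<in> ?L"
    then obtain \<sigma> s where \<sigma>: "\<sigma> \<in> {1, -1}" and "s \<in> dual_lattice D a b"
      and "s \<noteq> (0, 0)" and x: "x = \<sigma> * 2 * of_rat b * sqrt (of_int D) * of_rat (qf_norm D s)"
      by blast
    then obtain p q where s: "s = dual_of_traces D a b p q"
      using dual_lattice_eq_range[OF assms(1) D] by auto
    have "(p, q) \<noteq> (0, 0)"
      using \<open>s \<noteq> (0, 0)\<close> dual_of_traces_eq_0_iff[OF assms(1) D] unfolding s by blast
    moreover have "x = - \<sigma> * ?N p q / (2 * of_rat b * sqrt (of_int D))"
      unfolding x s norm_dual ..
    ultimately show "x \<in> ?R"
      using sign[OF \<sigma>] by blast
  next
    fix x
    assume "x \<in> ?R"
    then obtain \<sigma> p q where "\<sigma> \<in> {1, -1}" and "(p, q) \<noteq> (0, 0)"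
      and "x = - \<sigma> * 2 * of_rat b * sqrt (of_int D) * of_rat (qf_norm D (dual_of_traces D a b p q))"
      using norm_dual by auto
    moreover have "dual_of_traces D a b p q \<in> dual_lattice D a b"
      using dual_lattice_eq_range[OF assms(1) D] by auto
    ultimately show "x \<in> ?L"
      using sign dual_of_traces_eq_0_iff[OF assms(1) D] by blast
  }
qed

theorem theorem4:
  fixes a b :: rat and D :: int
  assumes "b \<noteq> 0" and "D \<ge> 2" and "squarefree D"
  shows "A1 (of_rat a + of_rat b * sqrt (of_int D)) =
    {\<sigma> * 2 * of_rat b * sqrt (of_int D) * of_rat (qf_norm D s) | \<sigma> s.
       \<sigma> \<in> {1, -1} \<and> s \<in> dual_lattice D a b \<and> s \<noteq> (0, 0)}"
proof -
  interpret quadratic_conjugates "of_rat a + of_rat b * sqrt (of_int D)" "of_rat a - of_rat b * sqrt (of_int D)"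
    using quadratic_conjugates_sqrt[OF assms] .
  have "(of_rat a + of_rat b * sqrt (of_int D)) - (of_rat a - of_rat b * sqrt (of_int D)) =
      2 * of_rat b * sqrt (of_int D)"
    by simp
  with A1_eq_norm_values show ?thesis
    using dual_lattice_norm_values[OF assms(1)] assms(2) by simp
qed

end
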